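(* For any generalized causal team $T$ over a signature $\sigma$: $T\models^g\Xi^{\{(s,\mathcal F),(t,\mathcal G)\}}$ for all $(s,\mathcal F),(t,\mathcal G)\in\mathbb S_\sigma$ with $\mathcal F\not\sim\mathcal G$, if and only if $T$ is uniform.
   Context: A signature $\sigma=(\mathrm{Dom},\mathrm{Ran})$: $\mathrm{Dom}$ nonempty finite set of variables, each with nonempty finite range $\mathrm{Ran}(X)$; $\mathbf X=\mathbf x$ abbreviates $X_1=x_1\wedge\dots\wedge X_n=x_n$ ($\mathbf x\in\prod\mathrm{Ran}(X_i)$), inconsistent if it contains $X=x,X=x'$ with $x\ne x'$. ${=}(V)$ is the constancy atom; $\bot$ abbreviates $X=x\wedge\neg(X=x)$; $\alpha\supset\beta$ abbreviates $\neg\alpha\vee\beta$; empty $\vee$-disjunction is $\bot$. Systems of functions $\mathcal F$: for each $V\in\mathrm{En}(\mathcal F)\subseteq\mathrm{Dom}$ parents $PA^{\mathcal F}_V\subseteq\mathrm{Dom}\setminus\{V\}$ and $\mathcal F_V:\mathrm{Ran}(PA^{\mathcal F}_V)\to\mathrm{Ran}(V)$; $\mathrm{Ex}(\mathcal F)=\mathrm{Dom}\setminus\mathrm{En}(\mathcal F)$; only recursive (acyclic parent graph), forming $\mathbb F_\sigma$. Assignments form $\mathbb A_\sigma$; $s$ compatible with $\mathcal F$ if $s(V)=\mathcal F_V(s(PA^{\mathcal F}_V))$ for $V\in\mathrm{En}(\mathcal F)$; $\mathbb S_\sigma$ = set of compatible pairs. A generalized causal team is a subset $T\subseteq\mathbb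 S_\sigma$; $T^-=\{s:(s,\mathcal F)\in T\}$. For consistent $\mathbf X=\mathbf x$: $\mathcal F_{\mathbf X=\mathbf x}$ restricts $\mathcal F$ to $\mathrm{En}(\mathcal F)\setminus\mathbf X$; $s^{\mathcal F}_{\mathbf X=\mathbf x}$: $X_i\mapsto x_i$, $V\mapsto s(V)$ on $\mathrm{Ex}(\mathcal F)\setminus\mathbf X$, $V\mapsto\mathcal F_V(s^{\mathcal F}_{\mathbf X=\mathbf x}(PA^{\mathcal F}_V))$ on $\mathrm{En}(\mathcal F)\setminus\mathbf X$; $T_{\mathbf X=\mathbf x}=\{(s^{\mathcal F}_{\mathbf X=\mathbf x},\mathcal F_{\mathbf X=\mathbf x}):(s,\mathcal F)\in T\}$. $\models^g$: $T\models X=x$ iff $s(X)=x$ for all $s\in T^-$; $T\models{=}(V)$ iff $s(V)=s'(V)$ for all $s,s'\in T^-$; $T\models\neg\alpha$ iff $\{(s,\mathcal F)\}\not\models\alpha$ for all $(s,\mathcal F)\in T$; $\wedge$ classical; $T\models\varphi\vee\psi$ iff $T=T_1\cup T_2$ with $T_1\models\varphi$, $T_2\models\psi$; $T\models\mathbf X=\mathbf x\;\Box\!\!\rightarrow\varphi$ iff $\mathbf X=\mathbf x$ inconsistent or $T_{\mathbf X=\mathbf x}\models\varphi$. $\mathrm{Cn}(\mathcal F)=\{V\in\mathrm{En}(\mathcal F):\mathcal F_V\text{ constant}\}$; $\mathcal F_V\sim\mathcal G_V$ iff $\mathcal F_V(\mathbf x\mathbf y)=\mathcal G_V(\mathbf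 x\mathbf z)$ for all $\mathbf x\in\mathrm{Ran}(PA^{\mathcal F}_V\cap PA^{\mathcal G}_V)$, $\mathbf y\in\mathrm{Ran}(PA^{\mathcal F}_V\setminus PA^{\mathcal G}_V)$, $\mathbf z\in\mathrm{Ran}(PA^{\mathcal G}_V\setminus PA^{\mathcal F}_V)$; $\mathcal F\sim\mathcal G$ iff $\mathrm{En}(\mathcal F)\setminus\mathrm{Cn}(\mathcal F)=\mathrm{En}(\mathcal G)\setminus\mathrm{Cn}(\mathcal G)$ and $\mathcal F_V\sim\mathcal G_V$ for each such $V$. $T$ is uniform if $\mathcal F\sim\mathcal G$ for all $(s,\mathcal F),(t,\mathcal G)\in T$. $T^{\mathcal F}=\{(s,\mathcal G)\in T:\mathcal G\sim\mathcal F\}$; $S\approx T$ iff $(S^{\mathcal F})^-=(T^{\mathcal F})^-$ for all $\mathcal F$; on pairs $(s,\mathcal F)\approx(t,\mathcal G)$ iff $s=t$ and $\mathcal F\sim\mathcal G$; $T/_{\approx}$ = set of $\approx$-classes of elements of $T$. $S\preccurlyeq T$ iff $S\approx R$ for some $R\subseteq T$ ($\emptyset\preccurlyeq T$ always). Formulas: $\Theta^{A}:=\bigvee_{s\in A}\bigwedge_{V\in\mathrm{Dom}}V=s(V)$. With $\mathbf W_V$ listing $\mathrm{Dom}\setminus\{V\}$: $\Phi^{\mathcal F}:=\bigwedge_{V\in\mathrm{En}(\mathcal F)\setminus\mathrm{Cn}(\mathcal F)}\eta(V)\wedge\bigwedge_{V\notin\mathrm{En}(\mathcal F)\setminus\mathrm{Cn}(\mathcal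 F)}\xi(V)$, $\eta(V)$ the conjunction of all $(\mathbf W=\mathbf w\wedge PA^{\mathcal F}_V=\mathbf p)\;\Box\!\!\rightarrow V=\mathcal F_V(\mathbf p)$ ($\mathbf W$ listing $\mathrm{Dom}\setminus(PA^{\mathcal F}_V\cup\{V\})$, $\mathbf w\in\mathrm{Ran}(\mathbf W)$, $\mathbf p\in\mathrm{Ran}(PA^{\mathcal F}_V)$), $\xi(V)$ the conjunction of all $V=v\supset(\mathbf W_V=\mathbf w\;\Box\!\!\rightarrow V=v)$. $\chi:=\bigwedge_V\bigwedge_{\mathbf w\in\mathrm{Ran}(\mathbf W_V)}(\mathbf W_V=\mathbf w\;\Box\!\!\rightarrow{=}(V))\wedge\bigwedge_V{=}(V)$; $\chi_0:=\bot$, $\chi_k:=\chi\vee\dots\vee\chi$ ($k$ disjuncts). For a nonempty generalized causal team $T$ with $|T/_{\approx}|=k+1$: $\Xi^T:=\chi_k\vee\Theta^{\mathbb A_\sigma\setminus T^-}\vee\bigvee\{\Theta^{\{s\}}\wedge\Phi^{\mathcal F}:s\in T^-,\ \mathcal F\in\mathbb F_\sigma,\ \{(s,\mathcal F)\}\not\preccurlyeq T\}$. *)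

theory Defs
  imports "HOL-Library.FuncSet"
begin

record ('v,'a) sig =
  Dom :: "'v set"
  Ran :: "'v \<Rightarrow> 'a set"

definition wf_sig :: "('v,'a) sig \<Rightarrow> bool" where
  "wf_sig \<sigma> \<longleftrightarrow> finite (Dom \<sigma>) \<and> Dom \<sigma> \<noteq> {} \<and>
     (\<forall>V\<in>Dom \<sigma>. finite (Ran \<sigma> V) \<and> Ran \<sigma> V \<noteq> {})"

definition RanS :: "('v,'a) sig \<Rightarrow> 'v set \<Rightarrow> ('v \<Rightarrow> 'a) set" where
  "RanS \<sigma> W = PiE W (Ran \<sigma>)"

definition Asg :: "('v,'a) sig \<Rightarrow> ('v \<Rightarrow> 'a) set" where
  "Asg \<sigma> = RanS \<sigma> (Dom \<sigma>)"

text \<open>A system of functions: endogenous variables, parent sets, and for each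
  endogenous V a function from Ran(PA_V) (extensional assignments on PA_V) to Ran(V).
  Canonical (extensional) representation, see wf_sys.\<close>
record ('v,'a) sysf =
  En :: "'v set"
  PA :: "'v \<Rightarrow> 'v set"
  Fn :: "'v \<Rightarrow> ('v \<Rightarrow> 'a) \<Rightarrow> 'a"

definition parent_rel :: "('v,'a) sysf \<Rightarrow> ('v \<times> 'v) set" where
  "parent_rel F = {(W,V). V \<in> En F \<and> W \<in> PA F V}"

definition wf_sys :: "('v,'a) sig \<Rightarrow> ('v,'a) sysf \<Rightarrow> bool" where
  "wf_sys \<sigma> F \<longleftrightarrow> En F \<subseteq> Dom \<sigma> \<and>
     (\<forall>V\<in>En F. PA F V \<subseteq> Dom \<sigma> - {V} \<and>
                Fn F V \<in> RanS \<sigma> (PA F V) \<rightarrow> Ran \<sigma> V \<and>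
                Fn F V \<in> extensional (RanS \<sigma> (PA F V))) \<and>
     (\<forall>V. V \<notin> En F \<longrightarrow> PA F V = {} \<and> Fn F V = (\<lambda>_. undefined)) \<and>
     acyclic (parent_rel F)"

definition Sys :: "('v,'a) sig \<Rightarrow> ('v,'a) sysf set" where
  "Sys \<sigma> = {F. wf_sys \<sigma> F}"

definition compatible :: "('v \<Rightarrow> 'a) \<Rightarrow> ('v,'a) sysf \<Rightarrow> bool" where
  "compatible s F \<longleftrightarrow> (\<forall>V\<in>En F. s V = Fn F V (restrict s (PA F V)))"

definition SPairs :: "('v,'a) sig \<Rightarrow> (('v \<Rightarrow> 'a) \<times> ('v,'a) sysf) set" where
  "SPairs \<sigma> = {(s,F). s \<in> Asg \<sigma> \<and> F \<in> Sys \<sigma> \<and> compatible s F}"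

type_synonym ('v,'a) team = "(('v \<Rightarrow> 'a) \<times> ('v,'a) sysf) set"

definition gteam :: "('v,'a) sig \<Rightarrow> ('v,'a) team \<Rightarrow> bool" where
  "gteam \<sigma> T \<longleftrightarrow> T \<subseteq> SPairs \<sigma>"

text \<open>A conjunction X1=x1 and ... and Xn=xn is represented by the list of pairs (Xi,xi).\<close>
definition consistent :: "('v \<times> 'a) list \<Rightarrow> bool" where
  "consistent xs \<longleftrightarrow> (\<forall>(X,x)\<in>set xs. \<forall>(X',x')\<in>set xs. X = X' \<longrightarrow> x = x')"

definition int_sys :: "('v \<times> 'a) list \<Rightarrow> ('v,'a) sysf \<Rightarrow> ('v,'a) sysf" where
  "int_sys xs F =
     (let E = En F - fst ` set xs in
      \<lparr> En = E,
        PA = (\<lambda>V. if V \<in> E then PA F V else {}),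
        Fn = (\<lambda>V. if V \<in> E then Fn F V else (\<lambda>_. undefined)) \<rparr>)"

definition int_asg :: "('v \<times> 'a) list \<Rightarrow> ('v,'a) sysf \<Rightarrow> ('v \<Rightarrow> 'a) \<Rightarrow> ('v \<Rightarrow> 'a)" where
  "int_asg xs F s =
     (THE t. \<forall>V.
        (V \<in> fst ` set xs \<longrightarrow> t V = the (map_of xs V)) \<and>
        (V \<notin> fst ` set xs \<and> V \<notin> En F \<longrightarrow> t V = s V) \<and>
        (V \<notin> fst ` set xs \<and> V \<in> En F \<longrightarrow> t V = Fn F V (restrict t (PA F V))))"

definition int_team :: "('v \<times> 'a) list \<Rightarrow> ('v,'a) team \<Rightarrow> ('v,'a) team" where
  "int_team xs T = (\<lambda>(s,F). (int_asg xs F s, int_sys xs F)) ` T"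

datatype ('v,'a) fml =
    Eq 'v 'a
  | Dep 'v
  | Neg "('v,'a) fml"
  | And "('v,'a) fml" "('v,'a) fml"
  | Or "('v,'a) fml" "('v,'a) fml"
  | Cf "('v \<times> 'a) list" "('v,'a) fml"

primrec gsat :: "('v,'a) team \<Rightarrow> ('v,'a) fml \<Rightarrow> bool" where
  "gsat T (Eq X x) \<longleftrightarrow> (\<forall>(s,F)\<in>T. s X = x)"
| "gsat T (Dep V) \<longleftrightarrow> (\<forall>(s,F)\<in>T. \<forall>(s',F')\<in>T. s V = s' V)"
| "gsat T (Neg \<alpha>) \<longleftrightarrow> (\<forall>p\<in>T. \<not> gsat {p} \<alpha>)"
| "gsat T (And \<phi> \<psi>) \<longleftrightarrow> gsat T \<phi> \<and> gsat T \<psi>"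
| "gsat T (Or \<phi> \<psi>) \<longleftrightarrow> (\<exists>T1 T2. T = T1 \<union> T2 \<and> gsat T1 \<phi> \<and> gsat T2 \<psi>)"
| "gsat T (Cf xs \<phi>) \<longleftrightarrow> (\<not> consistent xs \<or> gsat (int_team xs T) \<phi>)"

text \<open>bot abbreviates X=x and not X=x (the choice of X,x is immaterial).\<close>
definition Bot :: "('v,'a) fml" where
  "Bot = And (Eq undefined undefined) (Neg (Eq undefined undefined))"

definition Imp :: "('v,'a) fml \<Rightarrow> ('v,'a) fml \<Rightarrow> ('v,'a) fml" where
  "Imp \<alpha> \<beta> = Or (Neg \<alpha>) \<beta>"

fun BigOr :: "('v,'a) fml list \<Rightarrow> ('v,'a) fml" where
  "BigOr [] = Bot"
| "BigOr [\<phi>] = \<phi>"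
| "BigOr (\<phi> # \<psi>s) = Or \<phi> (BigOr \<psi>s)"

text \<open>Empty conjunction is the tautology not-bot (only used for nonempty lists here).\<close>
fun BigAnd :: "('v,'a) fml list \<Rightarrow> ('v,'a) fml" where
  "BigAnd [] = Neg Bot"
| "BigAnd [\<phi>] = \<phi>"
| "BigAnd (\<phi> # \<psi>s) = And \<phi> (BigAnd \<psi>s)"

definition lst :: "'b set \<Rightarrow> 'b list" where
  "lst S = (SOME xs. set xs = S \<and> distinct xs)"

text \<open>The formula W=w for a set of variables W listed in some order, w in Ran(W).\<close>
definition pairs :: "'v set \<Rightarrow> ('v \<Rightarrow> 'a) \<Rightarrow> ('v \<times> 'a) list" where
  "pairs W w = map (\<lambda>v. (v, w v)) (lst W)"

definition Theta :: "('v,'a) sig \<Rightarrow> ('v \<Rightarrow> 'a) set \<Rightarrow> ('v,'a) fml" where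
  "Theta \<sigma> A = BigOr (map (\<lambda>s. BigAnd (map (\<lambda>V. Eq V (s V)) (lst (Dom \<sigma>)))) (lst A))"

definition Cn :: "('v,'a) sig \<Rightarrow> ('v,'a) sysf \<Rightarrow> 'v set" where
  "Cn \<sigma> F = {V \<in> En F. \<forall>p\<in>RanS \<sigma> (PA F V). \<forall>q\<in>RanS \<sigma> (PA F V). Fn F V p = Fn F V q}"

text \<open>Juxtaposition xy of an assignment x on I and an assignment y on a disjoint set.\<close>
definition join :: "'v set \<Rightarrow> ('v \<Rightarrow> 'a) \<Rightarrow> ('v \<Rightarrow> 'a) \<Rightarrow> ('v \<Rightarrow> 'a)" where
  "join I x y = (\<lambda>v. if v \<in> I then x v else y v)"

definition fsim :: "('v,'a) sig \<Rightarrow> ('v,'a) sysf \<Rightarrow> ('v,'a) sysf \<Rightarrow> 'v \<Rightarrow> bool" where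
  "fsim \<sigma> F G V \<longleftrightarrow>
     (let I = PA F V \<inter> PA G V in
      \<forall>x\<in>RanS \<sigma> I. \<forall>y\<in>RanS \<sigma> (PA F V - PA G V). \<forall>z\<in>RanS \<sigma> (PA G V - PA F V).
         Fn F V (join I x y) = Fn G V (join I x z))"

definition ssim :: "('v,'a) sig \<Rightarrow> ('v,'a) sysf \<Rightarrow> ('v,'a) sysf \<Rightarrow> bool" where
  "ssim \<sigma> F G \<longleftrightarrow> En F - Cn \<sigma> F = En G - Cn \<sigma> G \<and>
     (\<forall>V \<in> En F - Cn \<sigma> F. fsim \<sigma> F G V)"

definition uniform :: "('v,'a) sig \<Rightarrow> ('v,'a) team \<Rightarrow> bool" where
  "uniform \<sigma> T \<longleftrightarrow> (\<forall>(s,F)\<in>T. \<forall>(t,G)\<in>T. ssim \<sigma> F G)"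

definition subF :: "('v,'a) sig \<Rightarrow> ('v,'a) team \<Rightarrow> ('v,'a) sysf \<Rightarrow> ('v,'a) team" where
  "subF \<sigma> T F = {(s,G)\<in>T. ssim \<sigma> G F}"

definition tapprox :: "('v,'a) sig \<Rightarrow> ('v,'a) team \<Rightarrow> ('v,'a) team \<Rightarrow> bool" where
  "tapprox \<sigma> S T \<longleftrightarrow> (\<forall>F\<in>Sys \<sigma>. fst ` subF \<sigma> S F = fst ` subF \<sigma> T F)"

definition papprox :: "('v,'a) sig \<Rightarrow> (('v \<Rightarrow> 'a) \<times> ('v,'a) sysf) \<Rightarrow> (('v \<Rightarrow> 'a) \<times> ('v,'a) sysf) \<Rightarrow> bool" where
  "papprox \<sigma> p q \<longleftrightarrow> fst p = fst q \<and> ssim \<sigma> (snd p) (snd q)"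

definition quotT :: "('v,'a) sig \<Rightarrow> ('v,'a) team \<Rightarrow> ('v,'a) team set" where
  "quotT \<sigma> T = (\<lambda>p. {q\<in>T. papprox \<sigma> p q}) ` T"

definition tprec :: "('v,'a) sig \<Rightarrow> ('v,'a) team \<Rightarrow> ('v,'a) team \<Rightarrow> bool" where
  "tprec \<sigma> S T \<longleftrightarrow> (\<exists>R. R \<subseteq> T \<and> tapprox \<sigma> S R)"

definition eta :: "('v,'a) sig \<Rightarrow> ('v,'a) sysf \<Rightarrow> 'v \<Rightarrow> ('v,'a) fml" where
  "eta \<sigma> F V =
     (let W = Dom \<sigma> - (PA F V \<union> {V}) in
      BigAnd [Cf (pairs W w @ pairs (PA F V) p) (Eq V (Fn F V p)).
                w \<leftarrow> lst (RanS \<sigma> W), p \<leftarrow> lst (RanS \<sigma> (PA F V))])"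

definition xi :: "('v,'a) sig \<Rightarrow> 'v \<Rightarrow> ('v,'a) fml" where
  "xi \<sigma> V =
     (let W = Dom \<sigma> - {V} in
      BigAnd [Imp (Eq V v) (Cf (pairs W w) (Eq V v)).
                v \<leftarrow> lst (Ran \<sigma> V), w \<leftarrow> lst (RanS \<sigma> W)])"

definition Phi :: "('v,'a) sig \<Rightarrow> ('v,'a) sysf \<Rightarrow> ('v,'a) fml" where
  "Phi \<sigma> F = And (BigAnd [eta \<sigma> F V. V \<leftarrow> lst (En F - Cn \<sigma> F)])
                  (BigAnd [xi \<sigma> V. V \<leftarrow> lst (Dom \<sigma> - (En F - Cn \<sigma> F))])"

definition chi :: "('v,'a) sig \<Rightarrow> ('v,'a) fml" where
  "chi \<sigma> = And (BigAnd [Cf (pairs (Dom \<sigma> - {V}) w) (Dep V).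
                         V \<leftarrow> lst (Dom \<sigma>), w \<leftarrow> lst (RanS \<sigma> (Dom \<sigma> - {V}))])
               (BigAnd [Dep V. V \<leftarrow> lst (Dom \<sigma>)])"

fun chik :: "('v,'a) sig \<Rightarrow> nat \<Rightarrow> ('v,'a) fml" where
  "chik \<sigma> 0 = Bot"
| "chik \<sigma> (Suc 0) = chi \<sigma>"
| "chik \<sigma> (Suc (Suc k)) = Or (chi \<sigma>) (chik \<sigma> (Suc k))"

definition Xi :: "('v,'a) sig \<Rightarrow> ('v,'a) team \<Rightarrow> ('v,'a) fml" where
  "Xi \<sigma> T =
     Or (chik \<sigma> (card (quotT \<sigma> T) - 1))
        (Or (Theta \<sigma> (Asg \<sigma> - fst ` T))
            (BigOr (lst {And (Theta \<sigma> {s}) (Phi \<sigma> F) | s F.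
                          s \<in> fst ` T \<and> F \<in> Sys \<sigma> \<and> \<not> tprec \<sigma> {(s,F)} T})))"

end

theory Submission
  imports Defs
begin

text \<open>
  The disjuncts Theta and Theta-and-Phi of Xi contain no dependence atom, so they hold in a team
  exactly when they hold at every member, and a single compatible pair (a, K) satisfies
  Theta^{s} and Phi^H iff a = s and K ~ H. Hence the flat part of Xi^P holds at a member p
  iff {p} does not precede P. For P = {(s,F),(t,G)} with F not similar to G the quotient of P
  has two classes, so Xi^P is chi or the flat part, and T satisfies Xi^P iff its members that
  precede P satisfy chi. Since chi fixes the value of every variable under every intervention
  on all other variables, a team of compatible pairs satisfies chi iff it has one assignment
  and pairwise similar systems. If T is not uniform, two dissimilar members of T form such a P
  and violate chi; if T is uniform, its members preceding P cannot use both s and t, as that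
  would make F similar to G.
\<close>

section \<open>Team semantics\<close>

lemma gsat_empty [simp]: "gsat {} \<phi>"
  by (induction \<phi>) (auto simp: int_team_def)

lemma gsat_downward_closed: "gsat T \<phi> \<Longrightarrow> S \<subseteq> T \<Longrightarrow> gsat S \<phi>"
proof (induction \<phi> arbitrary: S T)
  case (Or \<phi> \<psi>)
  then obtain T1 T2 where T: "T = T1 \<union> T2" and "gsat T1 \<phi>" "gsat T2 \<psi>" by auto
  then have "gsat (S \<inter> T1) \<phi>" "gsat (S \<inter> T2) \<psi>"
    using Or.IH(1)[of T1 "S \<inter> T1"] Or.IH(2)[of T2 "S \<inter> T2"] by blast+
  moreover have "S = (S \<inter> T1) \<union> (S \<inter> T2)" using T Or.prems(2) by blast
  ultimately show ?case by auto
next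
  case (Cf xs \<phi>)
  have "int_team xs S \<subseteq> int_team xs T" using Cf.prems(2) unfolding int_team_def by blast
  then show ?case using Cf.IH[of "int_team xs T" "int_team xs S"] Cf.prems(1) by auto
qed (simp only: gsat.simps; blast)+

lemma gsat_Bot_iff: "gsat T Bot \<longleftrightarrow> T = {}"
  unfolding Bot_def by auto

lemma gsat_BigAnd: "gsat T (BigAnd l) \<longleftrightarrow> (\<forall>\<phi>\<in>set l. gsat T \<phi>)"
  by (induction l rule: BigAnd.induct) (auto simp: gsat_Bot_iff)

lemma gsat_OrI: "T = T1 \<union> T2 \<Longrightarrow> gsat T1 \<phi> \<Longrightarrow> gsat T2 \<psi> \<Longrightarrow> gsat T (Or \<phi> \<psi>)"
  by auto

lemma gsat_singleton_Or: "gsat {p} (Or \<phi> \<psi>) \<longleftrightarrow> gsat {p} \<phi> \<or> gsat {p} \<psi>"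
proof
  assume "gsat {p} (Or \<phi> \<psi>)"
  then obtain T1 T2 where T: "{p} = T1 \<union> T2" and "gsat T1 \<phi>" "gsat T2 \<psi>" by auto
  have "p \<in> T1 \<or> p \<in> T2" using T by blast
  then show "gsat {p} \<phi> \<or> gsat {p} \<psi>"
    using \<open>gsat T1 \<phi>\<close> \<open>gsat T2 \<psi>\<close> gsat_downward_closed[of T1 \<phi> "{p}"]
      gsat_downward_closed[of T2 \<psi> "{p}"] by blast
next
  assume "gsat {p} \<phi> \<or> gsat {p} \<psi>"
  then show "gsat {p} (Or \<phi> \<psi>)"
  proof
    assume "gsat {p} \<phi>"
    then show ?thesis by (intro gsat_OrI[of _ "{p}" "{}"]) simp_all
  next
    assume "gsat {p} \<psi>"
    then show ?thesis by (intro gsat_OrI[of _ "{}" "{p}"]) simp_all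
  qed
qed

lemma gsat_singleton_BigOr: "gsat {p} (BigOr l) \<longleftrightarrow> (\<exists>\<phi>\<in>set l. gsat {p} \<phi>)"
  by (induction l rule: BigOr.induct) (simp_all only: gsat_singleton_Or BigOr.simps gsat_Bot_iff, auto)

lemma gsat_singleton_Imp: "gsat {p} (Imp \<alpha> \<beta>) \<longleftrightarrow> (gsat {p} \<alpha> \<longrightarrow> gsat {p} \<beta>)"
  unfolding Imp_def gsat_singleton_Or by simp

text \<open>Negation is evaluated pointwise, so only dependence atoms break flatness.\<close>
primrec flat_fml :: "('v,'a) fml \<Rightarrow> bool" where
  "flat_fml (Eq X x) = True"
| "flat_fml (Dep V) = False"
| "flat_fml (Neg \<alpha>) = True"
| "flat_fml (And \<phi> \<psi>) = (flat_fml \<phi> \<and> flat_fml \<psi>)"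
| "flat_fml (Or \<phi> \<psi>) = (flat_fml \<phi> \<and> flat_fml \<psi>)"
| "flat_fml (Cf xs \<phi>) = flat_fml \<phi>"

lemma gsat_flatI: "flat_fml \<phi> \<Longrightarrow> (\<And>p. p \<in> T \<Longrightarrow> gsat {p} \<phi>) \<Longrightarrow> gsat T \<phi>"
proof (induction \<phi> arbitrary: T)
  case (And \<phi> \<psi>)
  show ?case using And.IH(1)[of T] And.IH(2)[of T] And.prems by auto
next
  case (Or \<phi> \<psi>)
  let ?T1 = "{p\<in>T. gsat {p} \<phi>}" and ?T2 = "{p\<in>T. gsat {p} \<psi>}"
  have "T = ?T1 \<union> ?T2"
  proof (intro equalityI subsetI)
    fix p assume "p \<in> T"
    then show "p \<in> ?T1 \<union> ?T2" using Or.prems(2)[OF \<open>p \<in> T\<close>] unfolding gsat_singleton_Or by simp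
  qed auto
  moreover have "gsat ?T1 \<phi>" by (rule Or.IH(1)) (use Or.prems(1) in auto)
  moreover have "gsat ?T2 \<psi>" by (rule Or.IH(2)) (use Or.prems(1) in auto)
  ultimately show ?case by (rule gsat_OrI)
next
  case (Cf xs \<phi>)
  show ?case
  proof (cases "consistent xs")
    case True
    have "gsat (int_team xs T) \<phi>"
    proof (rule Cf.IH)
      show "flat_fml \<phi>" using Cf.prems(1) by simp
      fix q assume "q \<in> int_team xs T"
      then obtain s F where "(s,F) \<in> T" and q: "q = (int_asg xs F s, int_sys xs F)"
        by (auto simp: int_team_def)
      then show "gsat {q} \<phi>" using Cf.prems(2)[OF \<open>(s,F) \<in> T\<close>] True by (simp add: int_team_def)
    qed
    then show ?thesis by simp
  qed simp
qed auto

lemma flat_fml_Bot: "flat_fml Bot"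
  by (simp add: Bot_def)

lemma flat_fml_BigAnd: "(\<And>\<phi>. \<phi> \<in> set l \<Longrightarrow> flat_fml \<phi>) \<Longrightarrow> flat_fml (BigAnd l)"
  by (induction l rule: BigAnd.induct) (simp_all add: flat_fml_Bot)

lemma flat_fml_BigOr: "(\<And>\<phi>. \<phi> \<in> set l \<Longrightarrow> flat_fml \<phi>) \<Longrightarrow> flat_fml (BigOr l)"
  by (induction l rule: BigOr.induct) (simp_all add: flat_fml_Bot)

lemma flat_fml_Theta: "flat_fml (Theta \<sigma> A)"
  unfolding Theta_def by (auto intro!: flat_fml_BigOr flat_fml_BigAnd)

lemma flat_fml_Phi: "flat_fml (Phi \<sigma> H)"
  unfolding Phi_def eta_def xi_def Imp_def Let_def by (auto intro!: flat_fml_BigAnd)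

section \<open>Assignments and systems of functions\<close>

lemma set_lst: "finite S \<Longrightarrow> set (lst S) = S"
  unfolding lst_def by (metis (mono_tags, lifting) finite_distinct_list someI_ex)

lemma RanS_mem: "p \<in> RanS \<sigma> A \<Longrightarrow> u \<in> A \<Longrightarrow> p u \<in> Ran \<sigma> u"
  unfolding RanS_def by (rule PiE_mem)

lemma RanS_undefined: "p \<in> RanS \<sigma> A \<Longrightarrow> u \<notin> A \<Longrightarrow> p u = undefined"
  unfolding RanS_def by (rule PiE_arb)

lemma restrict_in_RanS: "(\<And>u. u \<in> A \<Longrightarrow> m u \<in> Ran \<sigma> u) \<Longrightarrow> restrict m A \<in> RanS \<sigma> A"
  unfolding RanS_def by (simp add: restrict_PiE_iff)

lemma Sys_En: "H \<in> Sys \<sigma> \<Longrightarrow> En H \<subseteq> Dom \<sigma>"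
  by (simp add: Sys_def wf_sys_def)

lemma Sys_PA: "H \<in> Sys \<sigma> \<Longrightarrow> PA H V \<subseteq> Dom \<sigma> - {V}"
  by (cases "V \<in> En H") (simp_all add: Sys_def wf_sys_def)

lemma Sys_not_En: "H \<in> Sys \<sigma> \<Longrightarrow> V \<notin> En H \<Longrightarrow> PA H V = {} \<and> Fn H V = (\<lambda>_. undefined)"
  by (simp add: Sys_def wf_sys_def)

lemma Sys_Fn: "H \<in> Sys \<sigma> \<Longrightarrow> V \<in> En H \<Longrightarrow> Fn H V \<in> RanS \<sigma> (PA H V) \<rightarrow>\<^sub>E Ran \<sigma> V"
  by (simp add: Sys_def wf_sys_def PiE_def)

lemma Asg_mem: "s \<in> Asg \<sigma> \<Longrightarrow> u \<in> Dom \<sigma> \<Longrightarrow> s u \<in> Ran \<sigma> u"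
  unfolding Asg_def by (rule RanS_mem)

lemma Asg_eqI: "s \<in> Asg \<sigma> \<Longrightarrow> t \<in> Asg \<sigma> \<Longrightarrow> (\<And>u. u \<in> Dom \<sigma> \<Longrightarrow> s u = t u) \<Longrightarrow> s = t"
  unfolding Asg_def RanS_def by (rule PiE_ext)

context
  fixes \<sigma> :: "('v,'a) sig"
  assumes wf: "wf_sig \<sigma>"
begin

lemma finite_Dom: "finite (Dom \<sigma>)"
  using wf by (simp add: wf_sig_def)

lemma finite_RanS: "A \<subseteq> Dom \<sigma> \<Longrightarrow> finite (RanS \<sigma> A)"
  unfolding RanS_def using wf finite_Dom
  by (intro finite_PiE) (auto simp: wf_sig_def intro: finite_subset)

lemma finite_Asg: "finite (Asg \<sigma>)"
  unfolding Asg_def by (rule finite_RanS) simp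

lemma ex_extension:
  assumes "A \<subseteq> B" "B \<subseteq> Dom \<sigma>" "\<And>u. u \<in> A \<Longrightarrow> m u \<in> Ran \<sigma> u"
  shows "\<exists>m'. (\<forall>u\<in>B. m' u \<in> Ran \<sigma> u) \<and> (\<forall>u\<in>A. m' u = m u)"
proof -
  have "Ran \<sigma> u \<noteq> {}" if "u \<in> B" for u
    using wf that assms(2) by (auto simp: wf_sig_def)
  then have "\<forall>u\<in>B. (if u \<in> A then m u else SOME v. v \<in> Ran \<sigma> u) \<in> Ran \<sigma> u"
    using assms(3) by (simp add: some_in_eq)
  then show ?thesis by (intro exI[of _ "\<lambda>u. if u \<in> A then m u else SOME v. v \<in> Ran \<sigma> u"]) simp
qed

lemma finite_Sys: "finite (Sys \<sigma>)"
proof -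
  let ?D = "Dom \<sigma>"
  define mk :: "'v set \<times> ('v \<Rightarrow> 'v set) \<times> ('v \<Rightarrow> ('v \<Rightarrow> 'a) \<Rightarrow> 'a) \<Rightarrow> ('v,'a) sysf" where
    "mk = (\<lambda>(E, P, f). \<lparr>En = E, PA = \<lambda>V. if V \<in> ?D then P V else {},
                         Fn = \<lambda>V. if V \<in> ?D then f V else (\<lambda>_. undefined)\<rparr>)"
  define C where "C V = insert (\<lambda>_. undefined) (\<Union>P\<in>Pow ?D. RanS \<sigma> P \<rightarrow>\<^sub>E Ran \<sigma> V)" for V
  have "Sys \<sigma> \<subseteq> mk ` (Pow ?D \<times> (?D \<rightarrow>\<^sub>E Pow ?D) \<times> (\<Pi>\<^sub>E V\<in>?D. C V))"
  proof
    fix F assume F: "F \<in> Sys \<sigma>"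
    have out: "PA F V = {} \<and> Fn F V = (\<lambda>_. undefined)" if "V \<notin> ?D" for V
      using Sys_En[OF F] Sys_not_En[OF F] that by blast
    have F_eq: "F = mk (En F, restrict (PA F) ?D, restrict (Fn F) ?D)"
      by (rule sysf.equality) (simp_all add: mk_def fun_eq_iff out)
    have PA_D: "PA F V \<in> Pow ?D" for V
      using Sys_PA[OF F, of V] by blast
    have Fn_C: "Fn F V \<in> C V" for V
    proof (cases "V \<in> En F")
      case True
      then have "Fn F V \<in> RanS \<sigma> (PA F V) \<rightarrow>\<^sub>E Ran \<sigma> V"
        using Sys_Fn[OF F] by auto
      then show ?thesis using PA_D unfolding C_def by blast
    next
      case False
      then show ?thesis using Sys_not_En[OF F] unfolding C_def by simp
    qed
    have "(En F, restrict (PA F) ?D, restrict (Fn F) ?D) \<in> Pow ?D \<times> (?D \<rightarrow>\<^sub>E Pow ?D) \<times> (\<Pi>\<^sub>E V\<in>?D. C V)"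
      using Sys_En[OF F] PA_D Fn_C by auto
    then show "F \<in> mk ` (Pow ?D \<times> (?D \<rightarrow>\<^sub>E Pow ?D) \<times> (\<Pi>\<^sub>E V\<in>?D. C V))"
      using F_eq by (rule rev_image_eqI)
  qed
  moreover have "finite (C V)" if "V \<in> ?D" for V
    using finite_Dom finite_RanS wf that unfolding C_def wf_sig_def
    by (intro finite_insert[THEN iffD2] finite_UN_I finite_PiE) auto
  then have "finite (Pow ?D \<times> (?D \<rightarrow>\<^sub>E Pow ?D) \<times> (\<Pi>\<^sub>E V\<in>?D. C V))"
    using finite_Dom by (intro finite_cartesian_product finite_PiE) auto
  ultimately show ?thesis by (meson finite_imageI finite_subset)
qed

end

section \<open>Interventions on all but one variable\<close>

text \<open>The value of V in (s, H) after every other variable has been set as in m.\<close>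
definition outcome :: "('v,'a) sysf \<Rightarrow> ('v \<Rightarrow> 'a) \<Rightarrow> ('v \<Rightarrow> 'a) \<Rightarrow> 'v \<Rightarrow> 'a" where
  "outcome H s m V = (if V \<in> En H then Fn H V (restrict m (PA H V)) else s V)"

lemma int_asg_eq:
  assumes "\<And>u. u \<in> En H \<Longrightarrow> u \<notin> fst ` set xs \<Longrightarrow> PA H u \<subseteq> fst ` set xs"
  shows "int_asg xs H s = (\<lambda>u. if u \<in> fst ` set xs then the (map_of xs u)
                                else outcome H s (\<lambda>v. the (map_of xs v)) u)"
    (is "_ = ?t")
proof -
  let ?D = "fst ` set xs" and ?m = "\<lambda>v. the (map_of xs v)"
  have restr: "restrict t (PA H u) = restrict ?m (PA H u)"
    if "u \<in> En H" "u \<notin> ?D" "\<forall>v\<in>?D. t v = ?m v" for t u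
    using assms[OF that(1,2)] that(3) unfolding restrict_def by (intro ext) auto
  show ?thesis unfolding int_asg_def
  proof (rule the_equality)
    show "\<forall>V. (V \<in> ?D \<longrightarrow> ?t V = the (map_of xs V)) \<and>
        (V \<notin> ?D \<and> V \<notin> En H \<longrightarrow> ?t V = s V) \<and>
        (V \<notin> ?D \<and> V \<in> En H \<longrightarrow> ?t V = Fn H V (restrict ?t (PA H V)))"
      using restr[of _ ?t] by (simp add: outcome_def)
  next
    fix t
    assume t: "\<forall>V. (V \<in> ?D \<longrightarrow> t V = the (map_of xs V)) \<and>
        (V \<notin> ?D \<and> V \<notin> En H \<longrightarrow> t V = s V) \<and>
        (V \<notin> ?D \<and> V \<in> En H \<longrightarrow> t V = Fn H V (restrict t (PA H V)))"
    then have "\<forall>v\<in>?D. t v = ?m v" by simp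
    with t show "t = ?t" using restr[of _ t] by (auto simp: outcome_def fun_eq_iff)
  qed
qed

lemma int_asg_all_but_one:
  assumes "H \<in> Sys \<sigma>" "fst ` set xs = Dom \<sigma> - {V}"
  shows "int_asg xs H s V = outcome H s (\<lambda>u. the (map_of xs u)) V"
proof -
  have "PA H u \<subseteq> fst ` set xs" if "u \<in> En H" "u \<notin> fst ` set xs" for u
    using Sys_En[OF assms(1)] Sys_PA[OF assms(1), of u] that assms(2) by auto
  from int_asg_eq[OF this] show ?thesis using assms(2) by simp
qed

lemma outcome_cong:
  assumes "H \<in> Sys \<sigma>" "\<And>u. u \<in> Dom \<sigma> - {V} \<Longrightarrow> m u = m' u"
  shows "outcome H s m V = outcome H s m' V"
proof -
  have "restrict m (PA H V) = restrict m' (PA H V)"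
    using Sys_PA[OF assms(1), of V] assms(2) unfolding restrict_def by (intro ext) auto
  then show ?thesis by (simp add: outcome_def)
qed

lemma map_of_pairs: "finite A \<Longrightarrow> map_of (pairs A w) u = (if u \<in> A then Some (w u) else None)"
proof -
  have "map_of (map (\<lambda>v. (v, w v)) l) u = (if u \<in> set l then Some (w u) else None)" for l
    by (induction l) auto
  then show "finite A \<Longrightarrow> ?thesis" unfolding pairs_def by (simp add: set_lst)
qed

lemma fst_set_pairs: "finite A \<Longrightarrow> fst ` set (pairs A w) = A"
  unfolding pairs_def by (force simp: set_lst)

lemma consistent_pairs [simp]: "consistent (pairs A w)"
  unfolding pairs_def consistent_def by auto

lemma consistent_pairs_append:
  "A \<inter> B = {} \<Longrightarrow> finite A \<Longrightarrow> finite B \<Longrightarrow> consistent (pairs A w @ pairs B p)"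
  unfolding pairs_def consistent_def by (auto simp: set_lst)

context
  fixes \<sigma> :: "('v,'a) sig"
  assumes wf: "wf_sig \<sigma>"
begin

lemma int_asg_pairs:
  assumes "H \<in> Sys \<sigma>"
  shows "int_asg (pairs (Dom \<sigma> - {V}) w) H s V = outcome H s w V"
proof -
  have fin: "finite (Dom \<sigma> - {V})" using finite_Dom[OF wf] by simp
  show ?thesis
    using int_asg_all_but_one[OF assms fst_set_pairs[OF fin]]
      outcome_cong[OF assms, of V "\<lambda>u. the (map_of (pairs (Dom \<sigma> - {V}) w) u)" w]
    by (simp add: map_of_pairs[OF fin])
qed

lemma int_asg_pairs_append:
  assumes "H \<in> Sys \<sigma>" "A \<union> B = Dom \<sigma> - {V}"
  shows "int_asg (pairs A w @ pairs B p) H s V = outcome H s (join A w p) V"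
proof -
  have fin: "finite A" "finite B"
    using finite_Dom[OF wf] assms(2) by (metis finite_Diff finite_Un)+
  have xs: "fst ` set (pairs A w @ pairs B p) = Dom \<sigma> - {V}"
    using assms(2) by (simp add: fst_set_pairs fin image_Un)
  have "the (map_of (pairs A w @ pairs B p) u) = join A w p u" if "u \<in> Dom \<sigma> - {V}" for u
    using that assms(2) by (auto simp: map_of_pairs fin join_def map_add_def)
  then show ?thesis
    unfolding int_asg_all_but_one[OF assms(1) xs] by (rule outcome_cong[OF assms(1)])
qed

end

section \<open>Similarity of systems of functions\<close>

lemma join_restrict: "join (P \<inter> Q) (restrict m (P \<inter> Q)) (restrict m (P - Q)) = restrict m P"
  by (auto simp: join_def restrict_def fun_eq_iff)

lemma fsim_iff:
  "fsim \<sigma> F G V \<longleftrightarrow> (\<forall>m. (\<forall>u\<in>PA F V \<union> PA G V. m u \<in> Ran \<sigma> u) \<longrightarrow>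
      Fn F V (restrict m (PA F V)) = Fn G V (restrict m (PA G V)))"
proof
  let ?P = "PA F V" and ?Q = "PA G V"
  let ?I = "?P \<inter> ?Q"
  assume fs: "fsim \<sigma> F G V"
  show "\<forall>m. (\<forall>u\<in>?P \<union> ?Q. m u \<in> Ran \<sigma> u) \<longrightarrow> Fn F V (restrict m ?P) = Fn G V (restrict m ?Q)"
  proof (intro allI impI)
    fix m assume m: "\<forall>u\<in>?P \<union> ?Q. m u \<in> Ran \<sigma> u"
    have "restrict m ?I \<in> RanS \<sigma> ?I" "restrict m (?P - ?Q) \<in> RanS \<sigma> (?P - ?Q)"
      "restrict m (?Q - ?P) \<in> RanS \<sigma> (?Q - ?P)"
      by (rule restrict_in_RanS, use m in blast)+
    then have "Fn F V (join ?I (restrict m ?I) (restrict m (?P - ?Q))) =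
               Fn G V (join ?I (restrict m ?I) (restrict m (?Q - ?P)))"
      using fs unfolding fsim_def Let_def by blast
    moreover have "join ?I (restrict m ?I) (restrict m (?Q - ?P)) = restrict m ?Q"
      using join_restrict[of ?Q ?P m] by (simp add: Int_commute)
    ultimately show "Fn F V (restrict m ?P) = Fn G V (restrict m ?Q)"
      by (simp add: join_restrict)
  qed
next
  let ?P = "PA F V" and ?Q = "PA G V"
  let ?I = "?P \<inter> ?Q"
  assume H: "\<forall>m. (\<forall>u\<in>?P \<union> ?Q. m u \<in> Ran \<sigma> u) \<longrightarrow> Fn F V (restrict m ?P) = Fn G V (restrict m ?Q)"
  show "fsim \<sigma> F G V" unfolding fsim_def Let_def
  proof (intro ballI)
    fix x y z
    assume x: "x \<in> RanS \<sigma> ?I" and y: "y \<in> RanS \<sigma> (?P - ?Q)" and z: "z \<in> RanS \<sigma> (?Q - ?P)"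
    define m where "m = join ?I x (join (?P - ?Q) y z)"
    have "\<forall>u\<in>?P \<union> ?Q. m u \<in> Ran \<sigma> u"
      using RanS_mem[OF x] RanS_mem[OF y] RanS_mem[OF z] by (auto simp: m_def join_def)
    moreover have "restrict m ?P = join ?I x y" "restrict m ?Q = join ?I x z"
      using RanS_undefined[OF y] RanS_undefined[OF z] by (auto simp: m_def join_def restrict_def fun_eq_iff)
    ultimately show "Fn F V (join ?I x y) = Fn G V (join ?I x z)" using H by metis
  qed
qed

lemma fsim_refl: "fsim \<sigma> F F V"
  by (simp add: fsim_iff)

lemma fsim_sym: "fsim \<sigma> F G V \<Longrightarrow> fsim \<sigma> G F V"
  unfolding fsim_iff by (metis Un_commute)

lemma ssim_refl: "ssim \<sigma> F F"
  by (simp add: ssim_def fsim_refl)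

lemma ssim_sym: "ssim \<sigma> F G \<Longrightarrow> ssim \<sigma> G F"
  unfolding ssim_def by (auto intro: fsim_sym)

context
  fixes \<sigma> :: "('v,'a) sig"
  assumes wf: "wf_sig \<sigma>"
begin

lemma fsim_iff_Dom:
  assumes "PA F V \<union> PA G V \<subseteq> Dom \<sigma> - {V}"
  shows "fsim \<sigma> F G V \<longleftrightarrow> (\<forall>m. (\<forall>u\<in>Dom \<sigma> - {V}. m u \<in> Ran \<sigma> u) \<longrightarrow>
           Fn F V (restrict m (PA F V)) = Fn G V (restrict m (PA G V)))"
  unfolding fsim_iff
proof (intro iffI allI impI)
  fix m assume "\<forall>m. (\<forall>u\<in>PA F V \<union> PA G V. m u \<in> Ran \<sigma> u) \<longrightarrow>
      Fn F V (restrict m (PA F V)) = Fn G V (restrict m (PA G V))"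
    and "\<forall>u\<in>Dom \<sigma> - {V}. m u \<in> Ran \<sigma> u"
  with assms show "Fn F V (restrict m (PA F V)) = Fn G V (restrict m (PA G V))" by blast
next
  fix m
  assume all: "\<forall>m. (\<forall>u\<in>Dom \<sigma> - {V}. m u \<in> Ran \<sigma> u) \<longrightarrow>
      Fn F V (restrict m (PA F V)) = Fn G V (restrict m (PA G V))"
    and m: "\<forall>u\<in>PA F V \<union> PA G V. m u \<in> Ran \<sigma> u"
  obtain m' where m': "\<forall>u\<in>Dom \<sigma> - {V}. m' u \<in> Ran \<sigma> u" "\<forall>u\<in>PA F V \<union> PA G V. m' u = m u"
    using ex_extension[OF wf assms, of m] m by blast
  then have "restrict m' (PA F V) = restrict m (PA F V)" "restrict m' (PA G V) = restrict m (PA G V)"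
    by (auto simp: restrict_def fun_eq_iff)
  then show "Fn F V (restrict m (PA F V)) = Fn G V (restrict m (PA G V))"
    using all m'(1) by metis
qed

lemma fsim_trans:
  assumes "F \<in> Sys \<sigma>" "G \<in> Sys \<sigma>" "H \<in> Sys \<sigma>" "fsim \<sigma> F G V" "fsim \<sigma> G H V"
  shows "fsim \<sigma> F H V"
proof -
  have PA: "PA F V \<union> PA G V \<subseteq> Dom \<sigma> - {V}" "PA G V \<union> PA H V \<subseteq> Dom \<sigma> - {V}"
    "PA F V \<union> PA H V \<subseteq> Dom \<sigma> - {V}"
    using Sys_PA[OF assms(1)] Sys_PA[OF assms(2)] Sys_PA[OF assms(3)] by blast+
  show ?thesis
    using assms(4,5) unfolding fsim_iff_Dom[OF PA(1)] fsim_iff_Dom[OF PA(2)] fsim_iff_Dom[OF PA(3)]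
    by metis
qed

lemma ssim_trans:
  assumes "F \<in> Sys \<sigma>" "G \<in> Sys \<sigma>" "H \<in> Sys \<sigma>" "ssim \<sigma> F G" "ssim \<sigma> G H"
  shows "ssim \<sigma> F H"
  using assms fsim_trans[OF assms(1-3)] unfolding ssim_def by blast

lemma outcome_constant_or_exogenous:
  assumes "(s,H) \<in> SPairs \<sigma>" "V \<notin> En H - Cn \<sigma> H" "\<forall>u\<in>Dom \<sigma> - {V}. m u \<in> Ran \<sigma> u"
  shows "outcome H s m V = s V"
proof (cases "V \<in> En H")
  case True
  have H: "H \<in> Sys \<sigma>" and s: "s \<in> Asg \<sigma>" "compatible s H"
    using assms(1) by (auto simp: SPairs_def)
  have "restrict m (PA H V) \<in> RanS \<sigma> (PA H V)" "restrict s (PA H V) \<in> RanS \<sigma> (PA H V)"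
    using Sys_PA[OF H, of V] assms(3) Asg_mem[OF s(1)] by (auto intro!: restrict_in_RanS)
  moreover have "V \<in> Cn \<sigma> H" using True assms(2) by blast
  ultimately have "Fn H V (restrict m (PA H V)) = Fn H V (restrict s (PA H V))"
    unfolding Cn_def by blast
  also have "\<dots> = s V" using s(2) True unfolding compatible_def by simp
  finally show ?thesis using True by (simp add: outcome_def)
qed (simp add: outcome_def)

lemma outcome_ssim:
  assumes "(t,F) \<in> SPairs \<sigma>" "(t,G) \<in> SPairs \<sigma>" "ssim \<sigma> F G"
    and "\<forall>u\<in>Dom \<sigma> - {V}. m u \<in> Ran \<sigma> u"
  shows "outcome F t m V = outcome G t m V"
proof (cases "V \<in> En F - Cn \<sigma> F")
  case True
  then have G: "V \<in> En G - Cn \<sigma> G" and fs: "fsim \<sigma> F G V"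
    using assms(3) unfolding ssim_def by auto
  have "PA F V \<union> PA G V \<subseteq> Dom \<sigma> - {V}"
    using assms(1,2) Sys_PA[of F \<sigma> V] Sys_PA[of G \<sigma> V] by (auto simp: SPairs_def)
  then have "Fn F V (restrict m (PA F V)) = Fn G V (restrict m (PA G V))"
    using fs assms(4) fsim_iff_Dom by blast
  then show ?thesis using True G by (simp add: outcome_def)
next
  case False
  then have "V \<notin> En G - Cn \<sigma> G" using assms(3) unfolding ssim_def by auto
  then show ?thesis
    using outcome_constant_or_exogenous[OF assms(1) False assms(4)] outcome_constant_or_exogenous[OF assms(2) _ assms(4)]
    by simp
qed

lemma CnI:
  assumes "H \<in> Sys \<sigma>" "V \<in> En H"
    and "\<And>m. \<forall>u\<in>Dom \<sigma> - {V}. m u \<in> Ran \<sigma> u \<Longrightarrow> Fn H V (restrict m (PA H V)) = c"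
  shows "V \<in> Cn \<sigma> H"
proof -
  have "Fn H V p = c" if p: "p \<in> RanS \<sigma> (PA H V)" for p
  proof -
    obtain m where m: "\<forall>u\<in>Dom \<sigma> - {V}. m u \<in> Ran \<sigma> u" "\<forall>u\<in>PA H V. m u = p u"
      using ex_extension[OF wf Sys_PA[OF assms(1)] _ RanS_mem[OF p]] by blast
    have "restrict m (PA H V) = p"
      using m(2) RanS_undefined[OF p] by (auto simp: restrict_def fun_eq_iff)
    then show ?thesis using assms(3)[OF m(1)] by simp
  qed
  then show ?thesis unfolding Cn_def using assms(2) by simp
qed

lemma ssimI_outcome:
  assumes sF: "(s,F) \<in> SPairs \<sigma>" and H: "H \<in> Sys \<sigma>"
    and E: "\<And>V m. V \<in> Dom \<sigma> \<Longrightarrow> \<forall>u\<in>Dom \<sigma> - {V}. m u \<in> Ran \<sigma> u \<Longrightarrow>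
      outcome F s m V = (if V \<in> En H - Cn \<sigma> H then Fn H V (restrict m (PA H V)) else s V)"
  shows "ssim \<sigma> F H"
proof -
  have F: "F \<in> Sys \<sigma>" using sF by (simp add: SPairs_def)
  have sub1: "V \<in> En H - Cn \<sigma> H" if V: "V \<in> En F - Cn \<sigma> F" for V
  proof (rule ccontr)
    assume N: "V \<notin> En H - Cn \<sigma> H"
    have VD: "V \<in> Dom \<sigma>" using V Sys_En[OF F] by blast
    have "Fn F V (restrict m (PA F V)) = s V" if "\<forall>u\<in>Dom \<sigma> - {V}. m u \<in> Ran \<sigma> u" for m
      using E[OF VD that] N V by (auto simp: outcome_def)
    then have "V \<in> Cn \<sigma> F" using CnI[OF F] V by blast
    then show False using V by blast
  qed
  have sub2: "V \<in> En F - Cn \<sigma> F" if V: "V \<in> En H - Cn \<sigma> H" for V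
  proof (rule ccontr)
    assume N: "V \<notin> En F - Cn \<sigma> F"
    have VD: "V \<in> Dom \<sigma>" using V Sys_En[OF H] by blast
    have "Fn H V (restrict m (PA H V)) = s V" if "\<forall>u\<in>Dom \<sigma> - {V}. m u \<in> Ran \<sigma> u" for m
      using E[OF VD that] outcome_constant_or_exogenous[OF sF N that] V by auto
    then have "V \<in> Cn \<sigma> H" using CnI[OF H] V by blast
    then show False using V by blast
  qed
  have "fsim \<sigma> F H V" if V: "V \<in> En F - Cn \<sigma> F" for V
  proof -
    have VD: "V \<in> Dom \<sigma>" using V Sys_En[OF F] by blast
    have "PA F V \<union> PA H V \<subseteq> Dom \<sigma> - {V}" using Sys_PA[OF F] Sys_PA[OF H] by blast
    moreover have "Fn F V (restrict m (PA F V)) = Fn H V (restrict m (PA H V))"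
      if "\<forall>u\<in>Dom \<sigma> - {V}. m u \<in> Ran \<sigma> u" for m
      using E[OF VD that] sub1[OF V] V by (auto simp: outcome_def)
    ultimately show ?thesis by (simp add: fsim_iff_Dom)
  qed
  then show ?thesis unfolding ssim_def using sub1 sub2 by blast
qed

end

section \<open>The formula chi\<close>

lemma gsat_Cf_Dep:
  "gsat T (Cf xs (Dep V)) \<longleftrightarrow>
     (consistent xs \<longrightarrow> (\<forall>(s,F)\<in>T. \<forall>(t,G)\<in>T. int_asg xs F s V = int_asg xs G t V))"
  by (auto simp: int_team_def)

context
  fixes \<sigma> :: "('v,'a) sig"
  assumes wf: "wf_sig \<sigma>"
begin

lemma gsat_chi:
  "gsat T (chi \<sigma>) \<longleftrightarrow>
     (\<forall>V\<in>Dom \<sigma>. \<forall>w\<in>RanS \<sigma> (Dom \<sigma> - {V}). gsat T (Cf (pairs (Dom \<sigma> - {V}) w) (Dep V))) \<and>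
     (\<forall>V\<in>Dom \<sigma>. gsat T (Dep V))"
  unfolding chi_def gsat.simps(4) gsat_BigAnd
  by (simp add: set_lst finite_Dom[OF wf] finite_RanS[OF wf])

lemma gsat_chiI:
  assumes "T \<subseteq> SPairs \<sigma>" "\<And>s F t G. (s,F) \<in> T \<Longrightarrow> (t,G) \<in> T \<Longrightarrow> s = t \<and> ssim \<sigma> F G"
  shows "gsat T (chi \<sigma>)"
  unfolding gsat_chi
proof (intro conjI ballI)
  fix V
  show "gsat T (Dep V)" using assms(2) by fastforce
next
  fix V w assume w: "w \<in> RanS \<sigma> (Dom \<sigma> - {V})"
  have "int_asg (pairs (Dom \<sigma> - {V}) w) F s V = int_asg (pairs (Dom \<sigma> - {V}) w) G t V"
    if "(s,F) \<in> T" "(t,G) \<in> T" for s F t G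
  proof -
    have "s = t" "ssim \<sigma> F G" using assms(2)[OF that] by auto
    moreover have "(s,F) \<in> SPairs \<sigma>" "(t,G) \<in> SPairs \<sigma>" using that assms(1) by auto
    ultimately show ?thesis
      using outcome_ssim[OF wf, of t F G V w] RanS_mem[OF w] int_asg_pairs[OF wf]
      by (simp add: SPairs_def)
  qed
  then show "gsat T (Cf (pairs (Dom \<sigma> - {V}) w) (Dep V))"
    unfolding gsat_Cf_Dep by blast
qed

lemma gsat_chiD:
  assumes sF: "(s,F) \<in> SPairs \<sigma>" and tG: "(t,G) \<in> SPairs \<sigma>"
    and chi: "gsat {(s,F),(t,G)} (chi \<sigma>)"
  shows "s = t \<and> ssim \<sigma> F G"
proof -
  have F: "F \<in> Sys \<sigma>" and G: "G \<in> Sys \<sigma>" using sF tG by (auto simp: SPairs_def)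
  note chi_Cf = chi[unfolded gsat_chi, THEN conjunct1]
    and chi_Dep = chi[unfolded gsat_chi, THEN conjunct2]
  have "gsat {(s,F),(t,G)} (Dep u)" if "u \<in> Dom \<sigma>" for u
    using chi_Dep that by blast
  then have "s u = t u" if "u \<in> Dom \<sigma>" for u
    using that unfolding gsat.simps(2) by blast
  then have st: "s = t" using sF tG by (intro Asg_eqI) (auto simp: SPairs_def)
  with tG have sG: "(s,G) \<in> SPairs \<sigma>" by simp
  have "ssim \<sigma> F G"
  proof (rule ssimI_outcome[OF wf sF G])
    fix V m assume V: "V \<in> Dom \<sigma>" and m: "\<forall>u\<in>Dom \<sigma> - {V}. m u \<in> Ran \<sigma> u"
    let ?w = "restrict m (Dom \<sigma> - {V})"
    have "?w \<in> RanS \<sigma> (Dom \<sigma> - {V})" using m by (intro restrict_in_RanS) blast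
    then have "gsat {(s,F),(t,G)} (Cf (pairs (Dom \<sigma> - {V}) ?w) (Dep V))"
      using chi_Cf V by blast
    then have "int_asg (pairs (Dom \<sigma> - {V}) ?w) F s V = int_asg (pairs (Dom \<sigma> - {V}) ?w) G t V"
      unfolding gsat_Cf_Dep using consistent_pairs by blast
    then have "outcome F s ?w V = outcome G s ?w V"
      unfolding int_asg_pairs[OF wf F] int_asg_pairs[OF wf G] st .
    moreover have "outcome F s m V = outcome F s ?w V" by (rule outcome_cong[OF F]) simp
    moreover have "outcome G s m V = outcome G s ?w V" by (rule outcome_cong[OF G]) simp
    moreover have "outcome G s m V = s V" if "V \<notin> En G - Cn \<sigma> G"
      using outcome_constant_or_exogenous[OF wf sG that m] .
    ultimately show "outcome F s m V =
        (if V \<in> En G - Cn \<sigma> G then Fn G V (restrict m (PA G V)) else s V)"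
      by (auto simp: outcome_def)
  qed
  with st show ?thesis ..
qed

lemma gsat_chi_iff:
  assumes "T \<subseteq> SPairs \<sigma>"
  shows "gsat T (chi \<sigma>) \<longleftrightarrow> (\<forall>(s,F)\<in>T. \<forall>(t,G)\<in>T. s = t \<and> ssim \<sigma> F G)"
proof
  assume chi: "gsat T (chi \<sigma>)"
  have "s = t \<and> ssim \<sigma> F G" if p: "(s,F) \<in> T" "(t,G) \<in> T" for s F t G
  proof (rule gsat_chiD)
    show "(s,F) \<in> SPairs \<sigma>" "(t,G) \<in> SPairs \<sigma>" using p assms by auto
    show "gsat {(s,F),(t,G)} (chi \<sigma>)" using p by (intro gsat_downward_closed[OF chi]) simp
  qed
  then show "\<forall>(s,F)\<in>T. \<forall>(t,G)\<in>T. s = t \<and> ssim \<sigma> F G" by auto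
next
  assume "\<forall>(s,F)\<in>T. \<forall>(t,G)\<in>T. s = t \<and> ssim \<sigma> F G"
  then show "gsat T (chi \<sigma>)" by (intro gsat_chiI[OF assms]) auto
qed

end

section \<open>The formulas Theta and Phi on single pairs\<close>

lemma gsat_singleton_Cf_Eq:
  "gsat {(s,F)} (Cf xs (Eq V v)) \<longleftrightarrow> (consistent xs \<longrightarrow> int_asg xs F s V = v)"
  by (simp add: int_team_def)

context
  fixes \<sigma> :: "('v,'a) sig"
  assumes wf: "wf_sig \<sigma>"
begin

lemma gsat_singleton_Theta:
  assumes "A \<subseteq> Asg \<sigma>" "s \<in> Asg \<sigma>"
  shows "gsat {(s,F)} (Theta \<sigma> A) \<longleftrightarrow> s \<in> A"
proof -
  have "finite A" using assms(1) finite_Asg[OF wf] finite_subset by blast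
  moreover have "gsat {(s,F)} (BigAnd (map (\<lambda>V. Eq V (a V)) (lst (Dom \<sigma>)))) \<longleftrightarrow> s = a"
    if "a \<in> A" for a
  proof -
    have "gsat {(s,F)} (BigAnd (map (\<lambda>V. Eq V (a V)) (lst (Dom \<sigma>)))) \<longleftrightarrow> (\<forall>V\<in>Dom \<sigma>. s V = a V)"
      by (simp add: gsat_BigAnd set_lst finite_Dom[OF wf])
    also have "\<dots> \<longleftrightarrow> s = a" using assms that by (auto intro: Asg_eqI)
    finally show ?thesis .
  qed
  ultimately show ?thesis unfolding Theta_def gsat_singleton_BigOr by (auto simp: set_lst)
qed

lemma gsat_Phi:
  assumes "H \<in> Sys \<sigma>"
  shows "gsat T (Phi \<sigma> H) \<longleftrightarrow> (\<forall>V\<in>En H - Cn \<sigma> H. gsat T (eta \<sigma> H V)) \<and>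
     (\<forall>V\<in>Dom \<sigma> - (En H - Cn \<sigma> H). gsat T (xi \<sigma> V))"
proof -
  have "finite (En H - Cn \<sigma> H)" using Sys_En[OF assms] finite_Dom[OF wf] finite_subset by blast
  then show ?thesis unfolding Phi_def by (simp add: gsat_BigAnd set_lst finite_Dom[OF wf])
qed

lemma gsat_eta:
  assumes "H \<in> Sys \<sigma>"
  shows "gsat T (eta \<sigma> H V) \<longleftrightarrow>
    (\<forall>w\<in>RanS \<sigma> (Dom \<sigma> - (PA H V \<union> {V})). \<forall>p\<in>RanS \<sigma> (PA H V).
       gsat T (Cf (pairs (Dom \<sigma> - (PA H V \<union> {V})) w @ pairs (PA H V) p) (Eq V (Fn H V p))))"
proof -
  have "PA H V \<subseteq> Dom \<sigma>" using Sys_PA[OF assms, of V] by blast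
  then show ?thesis
    unfolding eta_def Let_def gsat_BigAnd by (simp add: set_lst finite_RanS[OF wf])
qed

lemma gsat_xi:
  assumes "V \<in> Dom \<sigma>"
  shows "gsat T (xi \<sigma> V) \<longleftrightarrow> (\<forall>v\<in>Ran \<sigma> V. \<forall>w\<in>RanS \<sigma> (Dom \<sigma> - {V}).
     gsat T (Imp (Eq V v) (Cf (pairs (Dom \<sigma> - {V}) w) (Eq V v))))"
proof -
  have "finite (Ran \<sigma> V)" using wf assms by (simp add: wf_sig_def)
  then show ?thesis
    unfolding xi_def Let_def gsat_BigAnd by (simp add: set_lst finite_RanS[OF wf])
qed

lemma gsat_PhiD:
  assumes sF: "(s,F) \<in> SPairs \<sigma>" and H: "H \<in> Sys \<sigma>" and Phi: "gsat {(s,F)} (Phi \<sigma> H)"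
  shows "ssim \<sigma> F H"
proof (rule ssimI_outcome[OF wf sF H])
  have F: "F \<in> Sys \<sigma>" and s: "s \<in> Asg \<sigma>" using sF by (auto simp: SPairs_def)
  fix V m assume V: "V \<in> Dom \<sigma>" and m: "\<forall>u\<in>Dom \<sigma> - {V}. m u \<in> Ran \<sigma> u"
  show "outcome F s m V = (if V \<in> En H - Cn \<sigma> H then Fn H V (restrict m (PA H V)) else s V)"
  proof (cases "V \<in> En H - Cn \<sigma> H")
    case True
    let ?W = "Dom \<sigma> - (PA H V \<union> {V})" and ?p = "restrict m (PA H V)"
    let ?xs = "pairs ?W (restrict m ?W) @ pairs (PA H V) ?p"
    have PA: "PA H V \<subseteq> Dom \<sigma> - {V}" by (rule Sys_PA[OF H])
    have "restrict m ?W \<in> RanS \<sigma> ?W" "?p \<in> RanS \<sigma> (PA H V)"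
      using m PA by (auto intro!: restrict_in_RanS)
    then have "gsat {(s,F)} (Cf ?xs (Eq V (Fn H V ?p)))"
      using Phi True unfolding gsat_Phi[OF H] gsat_eta[OF H] by blast
    moreover have "consistent ?xs"
      using finite_Dom[OF wf] PA by (intro consistent_pairs_append) (auto intro: finite_subset)
    moreover have "?W \<union> PA H V = Dom \<sigma> - {V}" using PA by blast
    ultimately have "outcome F s (join ?W (restrict m ?W) ?p) V = Fn H V ?p"
      using int_asg_pairs_append[OF wf F] unfolding gsat_singleton_Cf_Eq by simp
    moreover have "outcome F s m V = outcome F s (join ?W (restrict m ?W) ?p) V"
      by (rule outcome_cong[OF F]) (auto simp: join_def)
    ultimately show ?thesis using True by simp
  next
    case False
    let ?w = "restrict m (Dom \<sigma> - {V})"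
    have "?w \<in> RanS \<sigma> (Dom \<sigma> - {V})" using m by (intro restrict_in_RanS) blast
    moreover have "gsat {(s,F)} (xi \<sigma> V)" using Phi V False unfolding gsat_Phi[OF H] by blast
    ultimately have "gsat {(s,F)} (Imp (Eq V (s V)) (Cf (pairs (Dom \<sigma> - {V}) ?w) (Eq V (s V))))"
      using Asg_mem[OF s V] unfolding gsat_xi[OF V] by blast
    then have "int_asg (pairs (Dom \<sigma> - {V}) ?w) F s V = s V"
      unfolding gsat_singleton_Imp gsat_singleton_Cf_Eq by simp
    then have "outcome F s ?w V = s V" unfolding int_asg_pairs[OF wf F] .
    moreover have "outcome F s m V = outcome F s ?w V" by (rule outcome_cong[OF F]) simp
    ultimately show ?thesis using False by auto
  qed
qed

lemma gsat_PhiI: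
  assumes sF: "(s,F) \<in> SPairs \<sigma>" and H: "H \<in> Sys \<sigma>" and sim: "ssim \<sigma> F H"
  shows "gsat {(s,F)} (Phi \<sigma> H)"
  unfolding gsat_Phi[OF H]
proof (intro conjI ballI)
  have F: "F \<in> Sys \<sigma>" using sF by (simp add: SPairs_def)
  fix V assume V: "V \<in> En H - Cn \<sigma> H"
  then have VF: "V \<in> En F - Cn \<sigma> F" and fs: "fsim \<sigma> F H V" using sim unfolding ssim_def by auto
  let ?W = "Dom \<sigma> - (PA H V \<union> {V})"
  have PA: "PA F V \<union> PA H V \<subseteq> Dom \<sigma> - {V}" using Sys_PA[OF F] Sys_PA[OF H] by blast
  show "gsat {(s,F)} (eta \<sigma> H V)" unfolding gsat_eta[OF H]
  proof (intro ballI)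
    fix w p assume w: "w \<in> RanS \<sigma> ?W" and p: "p \<in> RanS \<sigma> (PA H V)"
    have "\<forall>u\<in>Dom \<sigma> - {V}. join ?W w p u \<in> Ran \<sigma> u"
      using RanS_mem[OF w] RanS_mem[OF p] by (auto simp: join_def)
    then have "Fn F V (restrict (join ?W w p) (PA F V)) = Fn H V (restrict (join ?W w p) (PA H V))"
      using fs fsim_iff_Dom[OF wf PA] by blast
    moreover have "restrict (join ?W w p) (PA H V) = p"
      using RanS_undefined[OF p] by (auto simp: join_def restrict_def fun_eq_iff)
    ultimately have "outcome F s (join ?W w p) V = Fn H V p" using VF by (simp add: outcome_def)
    moreover have "?W \<union> PA H V = Dom \<sigma> - {V}" using PA by blast
    ultimately show "gsat {(s,F)} (Cf (pairs ?W w @ pairs (PA H V) p) (Eq V (Fn H V p)))"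
      unfolding gsat_singleton_Cf_Eq using int_asg_pairs_append[OF wf F] by simp
  qed
next
  have F: "F \<in> Sys \<sigma>" using sF by (simp add: SPairs_def)
  fix V assume V: "V \<in> Dom \<sigma> - (En H - Cn \<sigma> H)"
  then have VD: "V \<in> Dom \<sigma>" and VF: "V \<notin> En F - Cn \<sigma> F" using sim unfolding ssim_def by auto
  show "gsat {(s,F)} (xi \<sigma> V)" unfolding gsat_xi[OF VD]
  proof (intro ballI)
    fix v w assume w: "w \<in> RanS \<sigma> (Dom \<sigma> - {V})"
    have "int_asg (pairs (Dom \<sigma> - {V}) w) F s V = s V"
      using int_asg_pairs[OF wf F] outcome_constant_or_exogenous[OF wf sF VF] RanS_mem[OF w] by simp
    then show "gsat {(s,F)} (Imp (Eq V v) (Cf (pairs (Dom \<sigma> - {V}) w) (Eq V v)))"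
      unfolding gsat_singleton_Imp gsat_singleton_Cf_Eq by simp
  qed
qed

lemma gsat_singleton_Phi:
  "(s,F) \<in> SPairs \<sigma> \<Longrightarrow> H \<in> Sys \<sigma> \<Longrightarrow> gsat {(s,F)} (Phi \<sigma> H) \<longleftrightarrow> ssim \<sigma> F H"
  using gsat_PhiD gsat_PhiI by blast

end

section \<open>The formula Xi\<close>

definition Xi_disjuncts :: "('v,'a) sig \<Rightarrow> ('v,'a) team \<Rightarrow> ('v,'a) fml set" where
  "Xi_disjuncts \<sigma> P = {And (Theta \<sigma> {s}) (Phi \<sigma> F) | s F.
                          s \<in> fst ` P \<and> F \<in> Sys \<sigma> \<and> \<not> tprec \<sigma> {(s,F)} P}"

definition Xi_flat :: "('v,'a) sig \<Rightarrow> ('v,'a) team \<Rightarrow> ('v,'a) fml" where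
  "Xi_flat \<sigma> P = Or (Theta \<sigma> (Asg \<sigma> - fst ` P)) (BigOr (lst (Xi_disjuncts \<sigma> P)))"

lemma Xi_eq_Or_Xi_flat: "Xi \<sigma> P = Or (chik \<sigma> (card (quotT \<sigma> P) - 1)) (Xi_flat \<sigma> P)"
  unfolding Xi_def Xi_flat_def Xi_disjuncts_def ..

lemma card_quotT_dissimilar_pair:
  assumes "\<not> ssim \<sigma> F G"
  shows "card (quotT \<sigma> {(s,F),(t,G)}) = 2"
proof -
  have "\<not> ssim \<sigma> G F" using assms ssim_sym by blast
  then have "quotT \<sigma> {(s,F),(t,G)} = {{(s,F)}, {(t,G)}}"
    using assms ssim_refl[of \<sigma> F] ssim_refl[of \<sigma> G] by (auto simp: quotT_def papprox_def)
  moreover have "(s,F) \<noteq> (t,G)" using assms ssim_refl[of \<sigma> F] by auto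
  ultimately show ?thesis by simp
qed

lemma tprec_singleton_of_mem: "p \<in> P \<Longrightarrow> tprec \<sigma> {p} P"
  unfolding tprec_def tapprox_def by blast

context
  fixes \<sigma> :: "('v,'a) sig"
  assumes wf: "wf_sig \<sigma>"
begin

lemma tprec_singleton_iff:
  assumes "K \<in> Sys \<sigma>" "snd ` P \<subseteq> Sys \<sigma>"
  shows "tprec \<sigma> {(a,K)} P \<longleftrightarrow> (\<exists>K'. (a,K') \<in> P \<and> ssim \<sigma> K' K)"
proof
  assume "tprec \<sigma> {(a,K)} P"
  then obtain R where R: "R \<subseteq> P" "tapprox \<sigma> {(a,K)} R" unfolding tprec_def by blast
  have "a \<in> fst ` subF \<sigma> {(a,K)} K" by (simp add: subF_def ssim_refl)
  then have "a \<in> fst ` subF \<sigma> R K" using R(2) assms(1) unfolding tapprox_def by blast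
  then show "\<exists>K'. (a,K') \<in> P \<and> ssim \<sigma> K' K" using R(1) unfolding subF_def by force
next
  assume "\<exists>K'. (a,K') \<in> P \<and> ssim \<sigma> K' K"
  then obtain K' where K': "(a,K') \<in> P" "ssim \<sigma> K' K" by blast
  then have "K' \<in> Sys \<sigma>" using assms(2) by force
  then have "ssim \<sigma> K H \<longleftrightarrow> ssim \<sigma> K' H" if "H \<in> Sys \<sigma>" for H
    using ssim_trans[OF wf _ _ that] assms(1) K'(2) ssim_sym by metis
  then have "tapprox \<sigma> {(a,K)} {(a,K')}" unfolding tapprox_def subF_def by auto
  then show "tprec \<sigma> {(a,K)} P" unfolding tprec_def using K'(1) by blast
qed

lemma finite_Xi_disjuncts:
  assumes "finite P"
  shows "finite (Xi_disjuncts \<sigma> P)"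
proof (rule finite_subset)
  show "Xi_disjuncts \<sigma> P \<subseteq> (\<lambda>(s,F). And (Theta \<sigma> {s}) (Phi \<sigma> F)) ` (fst ` P \<times> Sys \<sigma>)"
    unfolding Xi_disjuncts_def by auto
  show "finite ((\<lambda>(s,F). And (Theta \<sigma> {s}) (Phi \<sigma> F)) ` (fst ` P \<times> Sys \<sigma>))"
    using assms finite_Sys[OF wf] by simp
qed

lemma flat_fml_Xi_flat:
  assumes "finite P"
  shows "flat_fml (Xi_flat \<sigma> P)"
proof -
  have "flat_fml \<phi>" if "\<phi> \<in> Xi_disjuncts \<sigma> P" for \<phi>
    using that by (auto simp: Xi_disjuncts_def flat_fml_Theta flat_fml_Phi)
  then have "flat_fml (BigOr (lst (Xi_disjuncts \<sigma> P)))"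
    by (intro flat_fml_BigOr) (simp add: set_lst[OF finite_Xi_disjuncts[OF assms]])
  then show ?thesis unfolding Xi_flat_def by (simp add: flat_fml_Theta)
qed

lemma gsat_singleton_BigOr_Xi_disjuncts:
  assumes P: "P \<subseteq> SPairs \<sigma>" "finite P" and aK: "(a,K) \<in> SPairs \<sigma>"
  shows "gsat {(a,K)} (BigOr (lst (Xi_disjuncts \<sigma> P))) \<longleftrightarrow>
    a \<in> fst ` P \<and> (\<exists>H\<in>Sys \<sigma>. \<not> tprec \<sigma> {(a,H)} P \<and> ssim \<sigma> K H)"
proof -
  have a: "a \<in> Asg \<sigma>" using aK by (simp add: SPairs_def)
  have Theta: "gsat {(a,K)} (Theta \<sigma> {s}) \<longleftrightarrow> a = s" if "s \<in> fst ` P" for s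
    using gsat_singleton_Theta[OF wf _ a, of "{s}"] that P(1) by (auto simp: SPairs_def)
  note Phi = gsat_singleton_Phi[OF wf aK]
  show ?thesis
    unfolding gsat_singleton_BigOr set_lst[OF finite_Xi_disjuncts[OF P(2)]]
  proof
    assume "\<exists>\<phi>\<in>Xi_disjuncts \<sigma> P. gsat {(a,K)} \<phi>"
    then obtain s H where s: "s \<in> fst ` P" and H: "H \<in> Sys \<sigma>" "\<not> tprec \<sigma> {(s,H)} P"
      and sat: "gsat {(a,K)} (And (Theta \<sigma> {s}) (Phi \<sigma> H))"
      unfolding Xi_disjuncts_def by blast
    then have "a = s" "ssim \<sigma> K H" using Theta[OF s] Phi[OF H(1)] by simp_all
    then show "a \<in> fst ` P \<and> (\<exists>H\<in>Sys \<sigma>. \<not> tprec \<sigma> {(a,H)} P \<and> ssim \<sigma> K H)"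
      using s H by blast
  next
    assume "a \<in> fst ` P \<and> (\<exists>H\<in>Sys \<sigma>. \<not> tprec \<sigma> {(a,H)} P \<and> ssim \<sigma> K H)"
    then obtain H where a: "a \<in> fst ` P" and H: "H \<in> Sys \<sigma>" "\<not> tprec \<sigma> {(a,H)} P" "ssim \<sigma> K H"
      by blast
    then have "gsat {(a,K)} (And (Theta \<sigma> {a}) (Phi \<sigma> H))" using Theta[OF a] Phi[OF H(1)] by simp
    moreover have "And (Theta \<sigma> {a}) (Phi \<sigma> H) \<in> Xi_disjuncts \<sigma> P"
      unfolding Xi_disjuncts_def using a H by blast
    ultimately show "\<exists>\<phi>\<in>Xi_disjuncts \<sigma> P. gsat {(a,K)} \<phi>" by blast
  qed
qed

lemma gsat_singleton_Xi_flat: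
  assumes P: "P \<subseteq> SPairs \<sigma>" "finite P" and p: "p \<in> SPairs \<sigma>"
  shows "gsat {p} (Xi_flat \<sigma> P) \<longleftrightarrow> \<not> tprec \<sigma> {p} P"
proof -
  obtain a K where pK: "p = (a,K)" by fastforce
  have K: "K \<in> Sys \<sigma>" and a: "a \<in> Asg \<sigma>" using p pK by (auto simp: SPairs_def)
  have PSys: "snd ` P \<subseteq> Sys \<sigma>" and PAsg: "fst ` P \<subseteq> Asg \<sigma>" using P(1) by (auto simp: SPairs_def)
  have "gsat {(a,K)} (Theta \<sigma> (Asg \<sigma> - fst ` P)) \<longleftrightarrow> a \<notin> fst ` P"
    using gsat_singleton_Theta[OF wf _ a] a by auto
  then have "gsat {(a,K)} (Xi_flat \<sigma> P) \<longleftrightarrow>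
      a \<notin> fst ` P \<or> (a \<in> fst ` P \<and> (\<exists>H\<in>Sys \<sigma>. \<not> tprec \<sigma> {(a,H)} P \<and> ssim \<sigma> K H))"
    unfolding Xi_flat_def gsat_singleton_Or gsat_singleton_BigOr_Xi_disjuncts[OF P p[unfolded pK]]
    by (simp only:)
  also have "\<dots> \<longleftrightarrow> \<not> tprec \<sigma> {(a,K)} P"
  proof -
    have "tprec \<sigma> {(a,H)} P" if "H \<in> Sys \<sigma>" "ssim \<sigma> K H" "tprec \<sigma> {(a,K)} P" for H
      using that K ssim_trans[OF wf] PSys
      unfolding tprec_singleton_iff[OF K PSys] tprec_singleton_iff[OF that(1) PSys]
      by (metis image_eqI snd_conv subsetD)
    moreover have "a \<in> fst ` P" if "tprec \<sigma> {(a,K)} P"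
      using that unfolding tprec_singleton_iff[OF K PSys] by force
    ultimately show ?thesis using K ssim_refl by blast
  qed
  finally show ?thesis using pK by simp
qed

lemma gsat_Or_Xi_flat:
  assumes T: "T \<subseteq> SPairs \<sigma>" and P: "P \<subseteq> SPairs \<sigma>" "finite P"
  shows "gsat T (Or \<phi> (Xi_flat \<sigma> P)) \<longleftrightarrow> gsat {p\<in>T. tprec \<sigma> {p} P} \<phi>"
proof
  assume "gsat T (Or \<phi> (Xi_flat \<sigma> P))"
  then obtain T1 T2 where T12: "T = T1 \<union> T2" and "gsat T1 \<phi>" and flat: "gsat T2 (Xi_flat \<sigma> P)"
    by auto
  have "{p\<in>T. tprec \<sigma> {p} P} \<subseteq> T1"
  proof
    fix p assume "p \<in> {p\<in>T. tprec \<sigma> {p} P}"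
    then have p: "p \<in> T" "tprec \<sigma> {p} P" by auto
    have "p \<in> SPairs \<sigma>" using p(1) T by blast
    then have "\<not> gsat {p} (Xi_flat \<sigma> P)" using gsat_singleton_Xi_flat[OF P] p(2) by simp
    then have "p \<notin> T2" using gsat_downward_closed[OF flat, of "{p}"] by auto
    moreover have "p \<in> T1 \<union> T2" using p(1) T12 by simp
    ultimately show "p \<in> T1" by simp
  qed
  then show "gsat {p\<in>T. tprec \<sigma> {p} P} \<phi>" by (rule gsat_downward_closed[OF \<open>gsat T1 \<phi>\<close>])
next
  assume "gsat {p\<in>T. tprec \<sigma> {p} P} \<phi>"
  moreover have "gsat {p\<in>T. \<not> tprec \<sigma> {p} P} (Xi_flat \<sigma> P)"
    by (rule gsat_flatI[OF flat_fml_Xi_flat[OF P(2)]]) (use gsat_singleton_Xi_flat[OF P] T in auto)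
  moreover have "T = {p\<in>T. tprec \<sigma> {p} P} \<union> {p\<in>T. \<not> tprec \<sigma> {p} P}" by auto
  ultimately show "gsat T (Or \<phi> (Xi_flat \<sigma> P))" by (intro gsat_OrI)
qed

lemma gsat_Xi_dissimilar_pair:
  assumes T: "T \<subseteq> SPairs \<sigma>" and P: "(s,F) \<in> SPairs \<sigma>" "(t,G) \<in> SPairs \<sigma>" and N: "\<not> ssim \<sigma> F G"
  shows "gsat T (Xi \<sigma> {(s,F),(t,G)}) \<longleftrightarrow>
    (\<forall>(a,K)\<in>T. \<forall>(b,L)\<in>T. tprec \<sigma> {(a,K)} {(s,F),(t,G)} \<and> tprec \<sigma> {(b,L)} {(s,F),(t,G)} \<longrightarrow>
       a = b \<and> ssim \<sigma> K L)"
proof -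
  let ?P = "{(s,F),(t,G)}"
  have "Xi \<sigma> ?P = Or (chi \<sigma>) (Xi_flat \<sigma> ?P)"
    by (simp add: Xi_eq_Or_Xi_flat card_quotT_dissimilar_pair[OF N])
  then have "gsat T (Xi \<sigma> ?P) \<longleftrightarrow> gsat {p\<in>T. tprec \<sigma> {p} ?P} (chi \<sigma>)"
    using gsat_Or_Xi_flat[OF T] P by simp
  also have "\<dots> \<longleftrightarrow> (\<forall>(a,K)\<in>T. \<forall>(b,L)\<in>T. tprec \<sigma> {(a,K)} ?P \<and> tprec \<sigma> {(b,L)} ?P \<longrightarrow>
       a = b \<and> ssim \<sigma> K L)"
    using T by (subst gsat_chi_iff[OF wf]) auto
  finally show ?thesis .
qed

lemma tprec_dissimilar_pair_same_asg:
  assumes P: "snd ` {(s,F),(t,G)} \<subseteq> Sys \<sigma>" and N: "\<not> ssim \<sigma> F G"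
    and KL: "K \<in> Sys \<sigma>" "L \<in> Sys \<sigma>" "ssim \<sigma> K L"
    and "tprec \<sigma> {(a,K)} {(s,F),(t,G)}" "tprec \<sigma> {(b,L)} {(s,F),(t,G)}"
  shows "a = b"
proof (rule ccontr)
  assume "a \<noteq> b"
  obtain K' L' where K': "(a,K') \<in> {(s,F),(t,G)}" "ssim \<sigma> K' K"
    and L': "(b,L') \<in> {(s,F),(t,G)}" "ssim \<sigma> L' L"
    using assms(6,7) unfolding tprec_singleton_iff[OF KL(1) P] tprec_singleton_iff[OF KL(2) P] by blast
  have "K' \<in> Sys \<sigma>" "L' \<in> Sys \<sigma>" using K'(1) L'(1) P by auto
  then have "ssim \<sigma> K' L'"
    using ssim_trans[OF wf _ KL(1) KL(2)] ssim_trans[OF wf _ KL(2)] ssim_sym K'(2) L'(2) KL(3) by metis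
  moreover have "(K' = F \<and> L' = G) \<or> (K' = G \<and> L' = F)" using K'(1) L'(1) \<open>a \<noteq> b\<close> by auto
  ultimately show False using N ssim_sym by blast
qed

lemma ssim_if_gsat_Xi_pair:
  assumes T: "T \<subseteq> SPairs \<sigma>" and p: "(s,F) \<in> T" "(t,G) \<in> T"
    and Xi: "\<not> ssim \<sigma> F G \<longrightarrow> gsat T (Xi \<sigma> {(s,F),(t,G)})"
  shows "ssim \<sigma> F G"
proof (rule ccontr)
  assume N: "\<not> ssim \<sigma> F G"
  have P: "(s,F) \<in> SPairs \<sigma>" "(t,G) \<in> SPairs \<sigma>" using p T by auto
  have "tprec \<sigma> {(s,F)} {(s,F),(t,G)}" "tprec \<sigma> {(t,G)} {(s,F),(t,G)}"
    by (simp_all add: tprec_singleton_of_mem)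
  then have "ssim \<sigma> F G" using Xi N p unfolding gsat_Xi_dissimilar_pair[OF T P N] by fastforce
  with N show False ..
qed

lemma gsat_Xi_dissimilar_pair_if_uniform:
  assumes U: "uniform \<sigma> T" and T: "T \<subseteq> SPairs \<sigma>"
    and P: "(s,F) \<in> SPairs \<sigma>" "(t,G) \<in> SPairs \<sigma>" and N: "\<not> ssim \<sigma> F G"
  shows "gsat T (Xi \<sigma> {(s,F),(t,G)})"
  unfolding gsat_Xi_dissimilar_pair[OF T P N]
proof clarify
  fix a K b L assume KL: "(a,K) \<in> T" "(b,L) \<in> T"
    and "tprec \<sigma> {(a,K)} {(s,F),(t,G)}" "tprec \<sigma> {(b,L)} {(s,F),(t,G)}"
  moreover have "ssim \<sigma> K L" using U KL unfolding uniform_def by blast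
  moreover have "K \<in> Sys \<sigma>" "L \<in> Sys \<sigma>" using KL T by (auto simp: SPairs_def)
  moreover have "snd ` {(s,F),(t,G)} \<subseteq> Sys \<sigma>" using P by (auto simp: SPairs_def)
  ultimately show "a = b \<and> ssim \<sigma> K L" using tprec_dissimilar_pair_same_asg[OF _ N] by blast
qed

end

theorem lemma5p23:
  fixes \<sigma> :: "('v,'a) sig" and T :: "('v,'a) team"
  assumes "wf_sig \<sigma>" and "gteam \<sigma> T"
  shows "(\<forall>(s,F)\<in>SPairs \<sigma>. \<forall>(t,G)\<in>SPairs \<sigma>.
            \<not> ssim \<sigma> F G \<longrightarrow> gsat T (Xi \<sigma> {(s,F),(t,G)}))
         \<longleftrightarrow> uniform \<sigma> T"
proof -
  have T: "T \<subseteq> SPairs \<sigma>" using assms(2) by (simp add: gteam_def)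
  show ?thesis
  proof
    assume Xi: "\<forall>(s,F)\<in>SPairs \<sigma>. \<forall>(t,G)\<in>SPairs \<sigma>. \<not> ssim \<sigma> F G \<longrightarrow> gsat T (Xi \<sigma> {(s,F),(t,G)})"
    show "uniform \<sigma> T" unfolding uniform_def
    proof clarify
      fix s F t G assume p: "(s,F) \<in> T" "(t,G) \<in> T"
      then have "(s,F) \<in> SPairs \<sigma>" "(t,G) \<in> SPairs \<sigma>" using T by auto
      then have "\<not> ssim \<sigma> F G \<longrightarrow> gsat T (Xi \<sigma> {(s,F),(t,G)})" using Xi by fast
      then show "ssim \<sigma> F G" by (rule ssim_if_gsat_Xi_pair[OF assms(1) T p])
    qed
  next
    assume "uniform \<sigma> T"
    then show "\<forall>(s,F)\<in>SPairs \<sigma>. \<forall>(t,G)\<in>SPairs \<sigma>. \<not> ssim \<sigma> F G \<longrightarrow> gsat T (Xi \<sigma> {(s,F),(t,G)})"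
      using gsat_Xi_dissimilar_pair_if_uniform[OF assms(1) _ T] by blast
  qed
qed

end
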